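(* For every set $S$, the family of maps $\iota\colon H_SX\to X\uplus(S\uplus\{\bot\})$ is a monad morphism from $\mathbb{H}_S$ to the exception monad $(-)\uplus(S\uplus\{\bot\})$.
   Context: $H_SX=\sum_{d\in\mathbb{R}_{\ge0}}S^{[0,d)}\times X\ \cup\ \sum_{I}S^{I}$, $I$ ranging over intervals $[0,d]$ ($d\in\mathbb{R}_{\ge0}$) and $[0,d)$ ($d\in\mathbb{R}_{\ge0}\cup\{\infty\}$); elements $\langle I,e,x\rangle$ and $\langle I,e\rangle$. Concatenation $\langle[0,d_1),e_1\rangle\frown\langle J,e_2\rangle=\langle J',\lambda t.\,\text{if }t<d_1\text{ then }e_1(t)\text{ else }e_2(t-d_1)\rangle$ with $J'=[0,d_1+d_2)$ or $[0,d_1+d_2]$ according as $J=[0,d_2)$ or $[0,d_2]$. Monad $\mathbb{H}_S$: $\eta(x)=\langle\emptyset,!,x\rangle$; $f^\star\langle I,e,x\rangle=\langle(I,e)\frown(J,e'),y\rangle$ if $f(x)=\langle J,e',y\rangle$, $=(I,e)\frown(J,e')$ if $f(x)=\langle J,e'\rangle$; $f^\star\langle I,e\rangle=\langle I,e\rangle$. Exception monad $(-)\uplus E$: unit $\mathsf{inl}$, lifting $f^\star=[f,\mathsf{inr}]$. Define $\iota(I,e,x)=\mathsf{inr}\,\mathsf{inl}\,e(0)$ if $I\ne\emptyset$ and $\mathsf{inl}\,x$ otherwise; $\iota(I,e)=\mathsf{inr}\,\mathsf{inl}\,e(0)$ if $I\neq\emptyset$ and $\mathsf{inr}\,\mathsf{inr}\,\bot$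 otherwise. A monad morphism is a natural transformation $\theta$ with $\theta\cdot\eta=\eta'$ and $\theta\cdot f^\star=(\theta\cdot f)^{\star'}\cdot\theta$. *)

theory Defs
  imports Complex_Main "HOL-Library.Extended_Real"
begin

datatype ivl = Open ereal | Closed real

fun in_ivl :: "ivl \<Rightarrow> real \<Rightarrow> bool" where
  "in_ivl (Open d) t = (0 \<le> t \<and> ereal t < d)"
| "in_ivl (Closed d) t = (0 \<le> t \<and> t \<le> d)"

definition ivl_nonempty :: "ivl \<Rightarrow> bool" where
  "ivl_nonempty I = (\<exists>t. in_ivl I t)"

(* Raw representation of H_S X: Conv I e x  is <I,e,x>,  Div I e is <I,e>.
   Only the values of e on I are meaningful. *)
datatype ('s,'x) H = Conv ivl "real \<Rightarrow> 's" 'x | Div ivl "real \<Rightarrow> 's"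

fun ivl_ok :: "ivl \<Rightarrow> bool" where
  "ivl_ok (Open d) = (0 \<le> d)"
| "ivl_ok (Closed d) = (0 \<le> d)"

fun wfH :: "'s set \<Rightarrow> ('s,'x) H \<Rightarrow> bool" where
  "wfH S (Conv I e x) =
     ((\<exists>d::real. I = Open (ereal d) \<and> 0 \<le> d) \<and> (\<forall>t. in_ivl I t \<longrightarrow> e t \<in> S))"
| "wfH S (Div I e) = (ivl_ok I \<and> (\<forall>t. in_ivl I t \<longrightarrow> e t \<in> S))"

definition HS :: "'s set \<Rightarrow> ('s,'x) H set" where
  "HS S = {h. wfH S h}"

fun ivl_len :: "ivl \<Rightarrow> real" where
  "ivl_len (Open d) = real_of_ereal d"
| "ivl_len (Closed d) = d"

fun cat_ivl :: "real \<Rightarrow> ivl \<Rightarrow> ivl" where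
  "cat_ivl d1 (Open d2) = Open (ereal d1 + d2)"
| "cat_ivl d1 (Closed d2) = Closed (d1 + d2)"

definition cat_fun :: "real \<Rightarrow> (real \<Rightarrow> 's) \<Rightarrow> (real \<Rightarrow> 's) \<Rightarrow> real \<Rightarrow> 's" where
  "cat_fun d1 e1 e2 = (\<lambda>t. if t < d1 then e1 t else e2 (t - d1))"

definition etaH :: "'x \<Rightarrow> ('s,'x) H" where
  "etaH x = Conv (Open 0) (\<lambda>_. undefined) x"

fun bindH :: "('x \<Rightarrow> ('s,'y) H) \<Rightarrow> ('s,'x) H \<Rightarrow> ('s,'y) H" where
  "bindH f (Conv I e x) =
     (case f x of
        Conv J e' y \<Rightarrow> Conv (cat_ivl (ivl_len I) J) (cat_fun (ivl_len I) e e') y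
      | Div J e' \<Rightarrow> Div (cat_ivl (ivl_len I) J) (cat_fun (ivl_len I) e e'))"
| "bindH f (Div I e) = Div I e"

(* Exception monad (-) + E with E = S + {bot}; bot is () :: unit *)
definition etaE :: "'x \<Rightarrow> 'x + 'e" where
  "etaE = Inl"

definition bindE :: "('x \<Rightarrow> 'y + 'e) \<Rightarrow> 'x + 'e \<Rightarrow> 'y + 'e" where
  "bindE f = case_sum f Inr"

fun iota :: "('s,'x) H \<Rightarrow> 'x + ('s + unit)" where
  "iota (Conv I e x) = (if ivl_nonempty I then Inr (Inl (e 0)) else Inl x)"
| "iota (Div I e) = (if ivl_nonempty I then Inr (Inl (e 0)) else Inr (Inr ()))"

end

theory Submission
  imports Defs
begin

text \<open>\<open>\<iota>\<close> only inspects whether the interval is empty and, if not, the value at time 0.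
  Binding a trace of positive length leaves both unchanged, while binding a trace of length 0
  (which carries no state at all) returns the continuation unchanged at time 0; this is exactly
  how the exception monad propagates an exception or passes on a value. Naturality is then a
  consequence of the two monad-morphism laws, since \<open>\<eta>\<close> produces well-formed traces.\<close>

lemma ivl_nonempty_Open: "ivl_nonempty (Open d) \<longleftrightarrow> 0 < d"
  unfolding ivl_nonempty_def by (cases d) (auto intro: exI[of _ 0])

lemma ivl_nonempty_Closed: "ivl_nonempty (Closed d) \<longleftrightarrow> 0 \<le> d"
  unfolding ivl_nonempty_def by auto

lemma ivl_nonempty_cat_ivl:
  assumes "0 < d" and "ivl_ok J"
  shows "ivl_nonempty (cat_ivl d J)"
proof (cases J)
  case (Open d')
  with assms show ?thesis by (cases d') (auto simp: ivl_nonempty_Open)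
qed (use assms in \<open>simp add: ivl_nonempty_Closed\<close>)

lemma cat_ivl_0 [simp]: "cat_ivl 0 J = J"
  by (cases J) (simp_all add: zero_ereal_def[symmetric])

lemma cat_fun_at_0: "cat_fun d e e' 0 = (if 0 < d then e 0 else e' (- d))"
  by (simp add: cat_fun_def)

lemma ivl_ok_if_in_HS: "h \<in> HS S \<Longrightarrow> ivl_ok (case h of Conv J _ _ \<Rightarrow> J | Div J _ \<Rightarrow> J)"
  by (cases h) (auto simp: HS_def)

lemma iota_bindH_Conv:
  assumes "0 \<le> d" and "f x \<in> HS S"
  shows "iota (bindH f (Conv (Open (ereal d)) e x)) =
           (if 0 < d then Inr (Inl (e 0)) else iota (f x))"
proof (cases "0 < d")
  case True
  with ivl_ok_if_in_HS[OF assms(2)] show ?thesis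
    by (cases "f x") (simp_all add: ivl_nonempty_cat_ivl cat_fun_at_0)
next
  case False
  with assms(1) have "d = 0" by simp
  then show ?thesis
    by (cases "f x") (simp_all add: zero_ereal_def[symmetric] cat_fun_at_0)
qed

lemma etaH_in_HS: "etaH x \<in> HS S"
  by (auto simp: HS_def etaH_def zero_ereal_def)

lemma iota_etaH: "iota (etaH x) = etaE x"
  by (simp add: etaH_def etaE_def ivl_nonempty_Open)

lemma iota_bindH:
  assumes f: "\<And>x. f x \<in> HS S" and h: "h \<in> HS S"
  shows "iota (bindH f h) = bindE (iota \<circ> f) (iota h)"
proof (cases h)
  case (Conv I e x)
  with h obtain d where "I = Open (ereal d)" "0 \<le> d" by (auto simp: HS_def)
  with Conv iota_bindH_Conv[where f = f, OF \<open>0 \<le> d\<close> f[of x]] show ?thesis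
    by (simp add: bindE_def ivl_nonempty_Open)
qed (simp add: bindE_def)

theorem lemma1:
  fixes S :: "'s set"
  shows "(\<forall>(g::'x \<Rightarrow> 'y) (h::('s,'x) H). h \<in> HS S \<longrightarrow>
            iota (bindH (etaH \<circ> g) h) = bindE (etaE \<circ> g) (iota h))
       \<and> (\<forall>x::'x. iota (etaH x :: ('s,'x) H) = etaE x)
       \<and> (\<forall>(f::'x \<Rightarrow> ('s,'y) H) (h::('s,'x) H).
            (\<forall>x. f x \<in> HS S) \<longrightarrow> h \<in> HS S \<longrightarrow>
            iota (bindH f h) = bindE (iota \<circ> f) (iota h))"
proof (intro conjI allI impI)
  fix g :: "'x \<Rightarrow> 'y" and h :: "('s,'x) H"
  assume "h \<in> HS S"
  moreover have "\<And>x. (etaH \<circ> g) x \<in> HS S"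
    by (simp add: etaH_in_HS)
  ultimately have "iota (bindH (etaH \<circ> g) h) = bindE (iota \<circ> (etaH \<circ> g)) (iota h)"
    using iota_bindH by blast
  also have "iota \<circ> (etaH \<circ> g) = etaE \<circ> g"
    by (simp add: comp_def iota_etaH)
  finally show "iota (bindH (etaH \<circ> g) h) = bindE (etaE \<circ> g) (iota h)" .
qed (auto simp: iota_etaH intro: iota_bindH)

end
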